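(* Let $d\ge 1$. Let $\mathbf{s}\in\mathbb{R}^d$ be a latent source vector and $\mathbf{u}$ an auxiliary variable, and suppose the conditional density of $\mathbf{s}$ given $\mathbf{u}$ is the contaminated density $$p(\mathbf{s}|\mathbf{u})=(1-\epsilon(\mathbf{u}))\,p^{\star}(\mathbf{s}|\mathbf{u})+\epsilon(\mathbf{u})\,\delta(\mathbf{s}|\mathbf{u}),\qquad \epsilon(\mathbf{u})\in[0,1),$$ where $p^{\star}$ is the target density and $\delta$ the outlier density. Assume: (A1) the data are $\mathbf{x}=\mathbf{f}(\mathbf{s})$ with $\mathbf{f}:\mathbb{R}^d\to\mathbb{R}^d$ smooth and invertible; (A2) $p^{\star}(\mathbf{s}|\mathbf{u})$ is conditionally independent and belongs to the exponential family $$\log p^{\star}(\mathbf{s}|\mathbf{u})=\sum_{j=1}^{d}\lambda_j(\mathbf{u})q_j(s_j)+\lambda_0(\mathbf{u})-\log Z(\boldsymbol{\lambda}(\mathbf{u})),$$ with scalar functions $q_j$, parameters $\lambda_j(\mathbf{u})$ and partition function $Z$; (A3) for all $\mathbf{s},\mathbf{u}$ the ratio $\delta(\mathbf{s}|\mathbf{u})/p^{\star}(\mathbf{s}|\mathbf{u})$ is finite; (A4) (in the limit of infinite data) the conditional density $p(\mathbf{x}|\mathbf{u})$ of $\mathbf{x}$ given $\mathbf{u}$ satisfies $$\log\frac{p(\mathbf{x}|\mathbf{u})}{c(\mathbf{x})e(\mathbf{u})}=\mathbf{w}(\mathbf{u})^{\top}\mathbf{h}(\mathbf{x})$$ for some vector-valued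 functions $\mathbf{w}(\mathbf{u})=(w_1(\mathbf{u}),\dots,w_d(\mathbf{u}))^\top$, $\mathbf{h}(\mathbf{x})=(h_1(\mathbf{x}),\dots,h_d(\mathbf{x}))^\top$ and scalar functions $c,e$; (A5) there exist $m+1$ points $\mathbf{u}_0,\mathbf{u}_1,\dots,\mathbf{u}_m$ such that the $d\times d$ matrices $\bar{\boldsymbol{\Lambda}}:=\sum_{i=1}^m\bar{\boldsymbol{\lambda}}(\mathbf{u}_i)\bar{\boldsymbol{\lambda}}(\mathbf{u}_i)^{\top}$ and $\sum_{i=1}^m\bar{\mathbf{w}}(\mathbf{u}_i)\bar{\boldsymbol{\lambda}}(\mathbf{u}_i)^{\top}$ are invertible, where $\bar{\boldsymbol{\lambda}}(\mathbf{u}):=\boldsymbol{\lambda}(\mathbf{u})-\boldsymbol{\lambda}(\mathbf{u}_0)$ and $\bar{\mathbf{w}}(\mathbf{u}):=\mathbf{w}(\mathbf{u})-\mathbf{w}(\mathbf{u}_0)$. Then, for $\epsilon(\mathbf{u})$ sufficiently small for all $\mathbf{u}$ (in the limit of infinite data), there exist an invertible $d\times d$ matrix $\mathbf{A}$ and a vector $\boldsymbol{\alpha}\in\mathbb{R}^d$ such that $$\mathbf{q}(\mathbf{s})+\mathbf{r}(\mathbf{s})=\mathbf{A}\mathbf{h}(\mathbf{x})+\boldsymbol{\alpha},$$ where $\mathbf{q}(\mathbf{s})=(q_1(s_1),\dots,q_d(s_d))^\top$ and, with $\bar{\boldsymbol{\omega}}(\mathbf{u}):=\bar{\boldsymbol{\Lambda}}^{-1}\bar{\boldsymbol{\lambda}}(\mathbf{u})$,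 $\mathbf{1}_d=(1,\dots,1)^\top$ and $\epsilon_{\max}:=\max_{i=0,1,\dots,m}\epsilon(\mathbf{u}_i)$, $$\mathbf{r}(\mathbf{s})=\sum_{i=1}^m\left\{\epsilon(\mathbf{u}_i)\frac{\delta(\mathbf{s}|\mathbf{u}_i)}{p^{\star}(\mathbf{s}|\mathbf{u}_i)}-\epsilon(\mathbf{u}_0)\frac{\delta(\mathbf{s}|\mathbf{u}_0)}{p^{\star}(\mathbf{s}|\mathbf{u}_0)}\right\}\bar{\boldsymbol{\omega}}(\mathbf{u}_i)+O(\epsilon_{\max}^2)\mathbf{1}_d .$$
   Context: This is a nonlinear ICA setting: observations $\mathbf{x}$ arise as an invertible nonlinear mixture of sources $\mathbf{s}$, and an auxiliary variable $\mathbf{u}$ (e.g. a time-segment label or past observation) is observed alongside $\mathbf{x}$. The conditional density $p(\mathbf{x}|\mathbf{u})$ is the one induced from the contaminated source density $p(\mathbf{s}|\mathbf{u})$ via $\mathbf{x}=\mathbf{f}(\mathbf{s})$. $O(\epsilon_{\max}^2)$ denotes a term bounded by a constant times $\epsilon_{\max}^2$ as $\epsilon_{\max}\to 0$. *)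

theory Defs
  imports "HOL-Analysis.Analysis" "HOL-Library.Landau_Symbols"
begin

fun Ck_map :: "nat \<Rightarrow> (real^'n \<Rightarrow> real^'m) \<Rightarrow> bool" where
  "Ck_map 0 f = continuous_on UNIV f"
| "Ck_map (Suc k) f = (f differentiable_on UNIV \<and>
      (\<forall>v. Ck_map k (\<lambda>x. frechet_derivative f (at x) v)))"

definition smooth_map :: "(real^'n \<Rightarrow> real^'m) \<Rightarrow> bool" where
  "smooth_map f \<longleftrightarrow> (\<forall>k. Ck_map k f)"

definition smooth_invertible :: "(real^'n \<Rightarrow> real^'n) \<Rightarrow> bool" where
  "smooth_invertible f \<longleftrightarrow> bij f \<and> smooth_map f \<and> smooth_map (inv f)"

definition is_density :: "(real^'n \<Rightarrow> real) \<Rightarrow> bool" where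
  "is_density p \<longleftrightarrow> (\<forall>s. 0 \<le> p s) \<and> (p has_integral 1) UNIV"

definition induced_density :: "(real^'n \<Rightarrow> real^'n) \<Rightarrow> (real^'n \<Rightarrow> real) \<Rightarrow> real^'n \<Rightarrow> real" where
  "induced_density f ps x =
     ps (inv f x) * \<bar>det (matrix (frechet_derivative (inv f) (at x)))\<bar>"

definition outer :: "real^'n \<Rightarrow> real^'n \<Rightarrow> real^'n^'n" where
  "outer a b = (\<chi> i j. a $ i * b $ j)"

end

theory Submission
  imports Defs
begin

text \<open>Write the contaminated density as \<open>p\<^sup>\<star> (1 + a)\<close> with
  \<open>a = \<epsilon> (\<delta> / p\<^sup>\<star> - 1)\<close>. Taking logarithms, using the exponential-family form of
  \<open>p\<^sup>\<star>\<close> and the log-ratio model for \<open>p(x|u)\<close>, and differencing against \<open>u\<^sub>0\<close> (which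
  cancels the Jacobian of \<open>f\<^sup>-\<^sup>1\<close> and \<open>c(x)\<close>) gives the exact linear equations
  \<open>\<lambda>\<^bsub>i\<^esub>\<^sup>T q(s) = w\<^bsub>i\<^esub>\<^sup>T h(x) + const\<^sub>i - (ln (1 + a\<^sub>i) - ln (1 + a\<^sub>0))\<close> (barred quantities).
  Solving them with the Gram matrix \<open>\<Lambda>\<close> makes \<open>q(s)\<close> affine in \<open>h(x)\<close> up to the
  terms \<open>ln (1 + a\<^sub>i)\<close>; replacing these by their linearisations \<open>a\<^sub>i\<close> produces \<open>r(s)\<close>, and
  \<open>ln (1 + a) - a = O(a\<^sup>2) = O(\<epsilon>\<^sub>m\<^sub>a\<^sub>x\<^sup>2)\<close>.\<close>

lemma outer_mult_vec: "outer a b *v v = (b \<bullet> v) *\<^sub>R a"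
  by (simp add: outer_def vec_eq_iff matrix_vector_mult_def inner_vec_def sum_distrib_left mult_ac)

lemma transpose_outer: "transpose (outer a b) = outer b a"
  by (simp add: outer_def transpose_def vec_eq_iff)

lemma transpose_sum: "transpose (sum M I) = (\<Sum>i\<in>I. transpose (M i :: 'a::comm_monoid_add^'n^'m))"
  by (simp add: transpose_def vec_eq_iff sum_component)

lemma sum_matrix_vector_mult: "sum M I *v (v :: 'a::comm_semiring_1^'n) = (\<Sum>i\<in>I. M i *v v)"
  by (induction I rule: infinite_finite_induct) (auto simp: matrix_vector_mult_add_rdistrib)

lemma matrix_vector_mult_sum_scaleR:
  "(M :: real^'n^'m) *v (\<Sum>i\<in>I. c i *\<^sub>R v i) = (\<Sum>i\<in>I. c i *\<^sub>R (M *v v i))"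
  by (simp add: linear_sum[OF matrix_vector_mul_linear] matrix_vector_mult_scaleR)

lemma matrix_inv_left: "invertible A \<Longrightarrow> matrix_inv A ** A = mat 1"
  unfolding invertible_def matrix_inv_def by (rule someI2_ex) auto

lemma invertible_matrix_inv:
  fixes A :: "'a::field^'n^'n"
  shows "invertible A \<Longrightarrow> invertible (matrix_inv A)"
  using invertible_right_inverse matrix_inv_left by blast

lemma gram_matrix_solve:
  fixes b :: "'i \<Rightarrow> real^'n"
  assumes "invertible (\<Sum>i\<in>I. outer (b i) (b i))"
  shows "y = matrix_inv (\<Sum>i\<in>I. outer (b i) (b i)) *v (\<Sum>i\<in>I. (b i \<bullet> y) *\<^sub>R b i)"
proof -
  have "(\<Sum>i\<in>I. (b i \<bullet> y) *\<^sub>R b i) = (\<Sum>i\<in>I. outer (b i) (b i)) *v y"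
    by (simp add: sum_matrix_vector_mult outer_mult_vec)
  then show ?thesis
    by (simp add: matrix_vector_mul_assoc matrix_inv_left[OF assms])
qed

lemma ln_one_plus_minus_bigo:
  fixes g :: "'a \<Rightarrow> real"
  assumes "(g \<longlongrightarrow> 0) F"
  shows "(\<lambda>t. ln (1 + g t) - g t) \<in> O[F](\<lambda>t. (g t)\<^sup>2)"
proof (rule bigoI)
  have "((\<lambda>t. \<bar>g t\<bar>) \<longlongrightarrow> 0) F"
    using assms by (rule tendsto_rabs_zero)
  then have "\<forall>\<^sub>F t in F. \<bar>g t\<bar> < 1/2"
    by (rule order_tendstoD(2)) simp
  then have "\<forall>\<^sub>F t in F. \<bar>g t\<bar> \<le> 1/2"
    by eventually_elim simp
  then show "\<forall>\<^sub>F t in F. norm (ln (1 + g t) - g t) \<le> 2 * norm ((g t)\<^sup>2)"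
    by eventually_elim (simp add: abs_ln_one_plus_x_minus_x_bound)
qed

lemma ln_induced_density_ratio:
  assumes "induced_density f p x / (c * a) > 0" "induced_density f p' x / (c * a') > 0"
    and "p (inv f x) > 0" "p' (inv f x) > 0"
  shows "ln (induced_density f p x / (c * a)) - ln (induced_density f p' x / (c * a'))
           = ln (p (inv f x)) - ln (p' (inv f x)) + ln (a' / a)"
proof -
  define J where "J = \<bar>det (matrix (frechet_derivative (inv f) (at x)))\<bar>"
  have dens: "induced_density f g x = g (inv f x) * J" for g
    by (simp add: induced_density_def J_def)
  have nonzero: "J \<noteq> 0" "c \<noteq> 0" "a \<noteq> 0" "a' \<noteq> 0"
    using assms(1,2) by (auto simp: dens)
  have ratio: "(induced_density f p x / (c * a)) / (induced_density f p' x / (c * a'))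
                 = (p (inv f x) / p' (inv f x)) * (a' / a)"
    using nonzero assms(4) by (simp add: dens field_simps)
  have "a' / a > 0"
    using assms by (metis ratio divide_pos_pos zero_less_mult_pos)
  have "ln (induced_density f p x / (c * a)) - ln (induced_density f p' x / (c * a'))
          = ln ((p (inv f x) / p' (inv f x)) * (a' / a))"
    unfolding ratio[symmetric] using assms(1,2) by (rule ln_divide_pos[symmetric])
  also have "\<dots> = ln (p (inv f x)) - ln (p' (inv f x)) + ln (a' / a)"
    using assms(3,4) \<open>a' / a > 0\<close> by (simp only: ln_mult_pos[of "_ / _"] ln_divide_pos divide_pos_pos)
  finally show ?thesis .
qed

text \<open>The model at one fixed index \<open>t\<close> of the limit, where all relations are exact.\<close>

locale contaminated_exp_family_model =
  fixes f :: "real^'d \<Rightarrow> real^'d"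
    and pstar \<delta> :: "'u \<Rightarrow> real^'d \<Rightarrow> real"
    and lam :: "'u \<Rightarrow> real^'d" and lam0 :: "'u \<Rightarrow> real" and Z :: "real^'d \<Rightarrow> real"
    and q :: "'d \<Rightarrow> real \<Rightarrow> real"
    and \<epsilon> :: "'u \<Rightarrow> real" and w :: "'u \<Rightarrow> real^'d" and h :: "real^'d \<Rightarrow> real^'d"
    and c :: "real^'d \<Rightarrow> real" and e :: "'u \<Rightarrow> real"
  assumes inj_f: "inj f"
    and eps_nonneg: "0 \<le> \<epsilon> u" and eps_less_1: "\<epsilon> u < 1"
    and delta_nonneg: "0 \<le> \<delta> u s"
    and pstar_pos: "0 < pstar u s"
    and ln_pstar: "ln (pstar u s) = (\<Sum>j\<in>UNIV. lam u $ j * q j (s $ j)) + lam0 u - ln (Z (lam u))"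
    and model_pos: "induced_density f (\<lambda>s. (1 - \<epsilon> u) * pstar u s + \<epsilon> u * \<delta> u s) x
                      / (c x * e u) > 0"
    and ln_model: "ln (induced_density f (\<lambda>s. (1 - \<epsilon> u) * pstar u s + \<epsilon> u * \<delta> u s) x
                      / (c x * e u)) = w u \<bullet> h x"
begin

lemma contaminated_density_eq:
  "(1 - \<epsilon> u) * pstar u s + \<epsilon> u * \<delta> u s = pstar u s * (1 + \<epsilon> u * (\<delta> u s / pstar u s - 1))"
  using pstar_pos[of u s] by (simp add: field_simps)

lemma one_plus_perturbation_pos: "0 < 1 + \<epsilon> u * (\<delta> u s / pstar u s - 1)"
proof -
  have "0 \<le> \<epsilon> u * (\<delta> u s / pstar u s)"
    using eps_nonneg delta_nonneg pstar_pos by (simp add: less_imp_le)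
  then show ?thesis
    using eps_less_1[of u] by (simp add: algebra_simps)
qed

lemma ln_contaminated_density:
  "ln ((1 - \<epsilon> u) * pstar u s + \<epsilon> u * \<delta> u s)
     = lam u \<bullet> (\<chi> k. q k (s $ k)) + lam0 u - ln (Z (lam u))
       + ln (1 + \<epsilon> u * (\<delta> u s / pstar u s - 1))"
  using pstar_pos one_plus_perturbation_pos
  by (simp add: contaminated_density_eq ln_mult_pos ln_pstar inner_vec_def)

lemma natural_parameter_diff_inner:
  "(lam u - lam v) \<bullet> (\<chi> k. q k (s $ k))
     = (w u - w v) \<bullet> h (f s) - ln (e v / e u) - (lam0 u - ln (Z (lam u))) + (lam0 v - ln (Z (lam v)))
       - (ln (1 + \<epsilon> u * (\<delta> u s / pstar u s - 1)) - ln (1 + \<epsilon> v * (\<delta> v s / pstar v s - 1)))"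
proof -
  let ?M = "\<lambda>u s. (1 - \<epsilon> u) * pstar u s + \<epsilon> u * \<delta> u s"
  have "(w u - w v) \<bullet> h (f s) = ln (?M u (inv f (f s))) - ln (?M v (inv f (f s))) + ln (e v / e u)"
    unfolding inner_diff_left ln_model[symmetric]
    by (rule ln_induced_density_ratio[OF model_pos model_pos])
       (use pstar_pos one_plus_perturbation_pos in \<open>simp_all add: contaminated_density_eq\<close>)
  moreover have "inv f (f s) = s"
    using inj_f by simp
  ultimately have "(w u - w v) \<bullet> h (f s) = ln (?M u s) - ln (?M v s) + ln (e v / e u)"
    by simp
  then show ?thesis
    by (simp add: ln_contaminated_density inner_diff_left)
qed

lemma affine_expansion:
  fixes uu :: "'i \<Rightarrow> 'u" and u0 :: 'u and I :: "'i set"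
  defines "\<Lambda> \<equiv> \<Sum>i\<in>I. outer (lam (uu i) - lam u0) (lam (uu i) - lam u0)"
  assumes "invertible \<Lambda>"
  shows "\<exists>\<alpha>. \<forall>s. (\<chi> k. q k (s $ k))
           + (\<Sum>i\<in>I. (\<epsilon> (uu i) * (\<delta> (uu i) s / pstar (uu i) s) - \<epsilon> u0 * (\<delta> u0 s / pstar u0 s))
                     *\<^sub>R (matrix_inv \<Lambda> *v (lam (uu i) - lam u0)))
           - (matrix_inv \<Lambda> ** transpose (\<Sum>i\<in>I. outer (w (uu i) - w u0) (lam (uu i) - lam u0))
                *v h (f s) + \<alpha>)
         = (\<Sum>i\<in>I. ((ln (1 + \<epsilon> u0 * (\<delta> u0 s / pstar u0 s - 1)) - \<epsilon> u0 * (\<delta> u0 s / pstar u0 s - 1))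
                    - (ln (1 + \<epsilon> (uu i) * (\<delta> (uu i) s / pstar (uu i) s - 1))
                       - \<epsilon> (uu i) * (\<delta> (uu i) s / pstar (uu i) s - 1)))
                   *\<^sub>R (matrix_inv \<Lambda> *v (lam (uu i) - lam u0)))"
proof -
  define b where "b i = lam (uu i) - lam u0" for i
  define a where "a u s = \<epsilon> u * (\<delta> u s / pstar u s - 1)" for u s
  define \<kappa> where "\<kappa> i = - ln (e u0 / e (uu i)) - (lam0 (uu i) - ln (Z (lam (uu i))))
                          + (lam0 u0 - ln (Z (lam u0)))" for i
  define \<alpha> where "\<alpha> = matrix_inv \<Lambda> *v (\<Sum>i\<in>I. \<kappa> i *\<^sub>R b i)
                      + (\<Sum>i\<in>I. (\<epsilon> (uu i) - \<epsilon> u0) *\<^sub>R (matrix_inv \<Lambda> *v b i))"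
  have transpose_W: "transpose (\<Sum>i\<in>I. outer (w (uu i) - w u0) (b i)) = (\<Sum>i\<in>I. outer (b i) (w (uu i) - w u0))"
    by (simp add: transpose_sum transpose_outer)
  have coeff: "b i \<bullet> (\<chi> k. q k (s $ k))
      = (w (uu i) - w u0) \<bullet> h (f s) + \<kappa> i - (ln (1 + a (uu i) s) - ln (1 + a u0 s))" for i s
    unfolding b_def a_def \<kappa>_def natural_parameter_diff_inner by simp
  have expansion: "(\<chi> k. q k (s $ k))
      = matrix_inv \<Lambda> ** transpose (\<Sum>i\<in>I. outer (w (uu i) - w u0) (b i)) *v h (f s) + \<alpha>
        - (\<Sum>i\<in>I. (ln (1 + a (uu i) s) - ln (1 + a u0 s) + (\<epsilon> (uu i) - \<epsilon> u0)) *\<^sub>R (matrix_inv \<Lambda> *v b i))"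
    for s
  proof -
    have "(\<chi> k. q k (s $ k)) = matrix_inv \<Lambda> *v (\<Sum>i\<in>I. (b i \<bullet> (\<chi> k. q k (s $ k))) *\<^sub>R b i)"
      using assms(2) unfolding \<Lambda>_def b_def by (rule gram_matrix_solve)
    also have "(\<Sum>i\<in>I. (b i \<bullet> (\<chi> k. q k (s $ k))) *\<^sub>R b i)
        = transpose (\<Sum>i\<in>I. outer (w (uu i) - w u0) (b i)) *v h (f s) + (\<Sum>i\<in>I. \<kappa> i *\<^sub>R b i)
          - (\<Sum>i\<in>I. (ln (1 + a (uu i) s) - ln (1 + a u0 s)) *\<^sub>R b i)"
      unfolding coeff transpose_W sum_matrix_vector_mult outer_mult_vec
      by (simp add: scaleR_add_left scaleR_diff_left sum.distrib sum_subtractf)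
    finally show ?thesis
      by (simp add: \<alpha>_def matrix_vector_right_distrib matrix_vector_mult_diff_distrib
          matrix_vector_mult_sum_scaleR matrix_vector_mul_assoc scaleR_add_left sum.distrib
          del: transpose_matrix_vector)
  qed
  show ?thesis
    using expansion by (intro exI[of _ \<alpha>] allI)
       (simp add: a_def b_def algebra_simps sum.distrib sum_subtractf)
qed

end

lemma contamination_remainder_bigo:
  fixes \<epsilon> :: "'t \<Rightarrow> 'i \<Rightarrow> real"
  assumes "finite I" "i \<in> I" "\<And>t. 0 \<le> \<epsilon> t i" "((\<lambda>t. \<epsilon> t i) \<longlongrightarrow> 0) F"
  shows "(\<lambda>t. ln (1 + \<epsilon> t i * k) - \<epsilon> t i * k) \<in> O[F](\<lambda>t. (Max ((\<lambda>j. \<epsilon> t j) ` I))\<^sup>2)"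
proof -
  have "((\<lambda>t. \<epsilon> t i * k) \<longlongrightarrow> 0) F"
    using tendsto_mult_left_zero[OF assms(4)] .
  then have "(\<lambda>t. ln (1 + \<epsilon> t i * k) - \<epsilon> t i * k) \<in> O[F](\<lambda>t. (\<epsilon> t i * k)\<^sup>2)"
    by (rule ln_one_plus_minus_bigo)
  also have "(\<lambda>t. (\<epsilon> t i * k)\<^sup>2) \<in> O[F](\<lambda>t. (Max ((\<lambda>j. \<epsilon> t j) ` I))\<^sup>2)"
  proof (rule bigoI[where c = "k\<^sup>2"], rule always_eventually, rule allI)
    fix t
    have "\<epsilon> t i \<le> Max ((\<lambda>j. \<epsilon> t j) ` I)"
      using assms(1,2) by (simp add: Max_ge)
    then have "(\<epsilon> t i)\<^sup>2 \<le> (Max ((\<lambda>j. \<epsilon> t j) ` I))\<^sup>2"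
      using assms(3) by (simp add: power_mono)
    then show "norm ((\<epsilon> t i * k)\<^sup>2) \<le> k\<^sup>2 * norm ((Max ((\<lambda>j. \<epsilon> t j) ` I))\<^sup>2)"
      by (simp add: power_mult_distrib mult.commute mult_left_mono)
  qed
  finally show ?thesis .
qed

lemma bigo_sum_scaleR_component:
  fixes r :: "'i \<Rightarrow> 't \<Rightarrow> real" and v :: "'i \<Rightarrow> real^'n"
  assumes "\<And>i. i \<in> I \<Longrightarrow> r i \<in> O[F](g)"
  shows "(\<lambda>t. (\<Sum>i\<in>I. r i t *\<^sub>R v i) $ j) \<in> O[F](g)"
proof -
  have "(\<lambda>t. r i t * v i $ j) \<in> O[F](g)" if "i \<in> I" for i
    using assms[OF that] by (cases "v i $ j = 0") auto
  then show ?thesis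
    by (simp add: sum_component big_sum_in_bigo)
qed

theorem theorem1:
  fixes f :: "real^'d \<Rightarrow> real^'d"
    and pstar \<delta> :: "'u \<Rightarrow> real^'d \<Rightarrow> real"
    and lam :: "'u \<Rightarrow> real^'d" and lam0 :: "'u \<Rightarrow> real" and Z :: "real^'d \<Rightarrow> real"
    and q :: "'d \<Rightarrow> real \<Rightarrow> real"
    and F :: "'t filter"
    and \<epsilon> :: "'t \<Rightarrow> 'u \<Rightarrow> real"
    and w :: "'t \<Rightarrow> 'u \<Rightarrow> real^'d" and h :: "'t \<Rightarrow> real^'d \<Rightarrow> real^'d"
    and c :: "'t \<Rightarrow> real^'d \<Rightarrow> real" and e :: "'t \<Rightarrow> 'u \<Rightarrow> real"
    and uu :: "nat \<Rightarrow> 'u" and m :: nat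
  assumes eps_range: "\<And>t u. 0 \<le> \<epsilon> t u \<and> \<epsilon> t u < 1"
    and eps_small: "\<And>i. i \<le> m \<Longrightarrow> ((\<lambda>t. \<epsilon> t (uu i)) \<longlongrightarrow> 0) F"
    and pstar_dens: "\<And>u. is_density (pstar u)"
    and delta_dens: "\<And>u. is_density (\<delta> u)"
    and A1: "smooth_invertible f"
    and A2: "\<And>u s. pstar u s > 0 \<and>
               ln (pstar u s) = (\<Sum>j\<in>UNIV. lam u $ j * q j (s $ j)) + lam0 u - ln (Z (lam u))"
    and A4: "\<And>t u x.
               induced_density f (\<lambda>s. (1 - \<epsilon> t u) * pstar u s + \<epsilon> t u * \<delta> u s) x
                 / (c t x * e t u) > 0 \<and>
               ln (induced_density f (\<lambda>s. (1 - \<epsilon> t u) * pstar u s + \<epsilon> t u * \<delta> u s) x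
                 / (c t x * e t u)) = w t u \<bullet> h t x"
    and A5a: "invertible (\<Sum>i=1..m. outer (lam (uu i) - lam (uu 0)) (lam (uu i) - lam (uu 0)))"
    and A5b: "\<And>t. invertible
               (\<Sum>i=1..m. outer (w t (uu i) - w t (uu 0)) (lam (uu i) - lam (uu 0)))"
  shows "\<exists>(A :: 't \<Rightarrow> real^'d^'d) (\<alpha> :: 't \<Rightarrow> real^'d).
           (\<forall>t. invertible (A t)) \<and>
           (\<forall>s j. (\<lambda>t. ((\<chi> k. q k (s $ k))
                       + (\<Sum>i=1..m.
                           (\<epsilon> t (uu i) * (\<delta> (uu i) s / pstar (uu i) s)
                            - \<epsilon> t (uu 0) * (\<delta> (uu 0) s / pstar (uu 0) s))
                           *\<^sub>R (matrix_inv (\<Sum>l=1..m. outer (lam (uu l) - lam (uu 0))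
                                                       (lam (uu l) - lam (uu 0)))
                                 *v (lam (uu i) - lam (uu 0))))
                       - (A t *v h t (f s) + \<alpha> t)) $ j)
                 \<in> O[F](\<lambda>t. (Max ((\<lambda>i. \<epsilon> t (uu i)) ` {0..m}))\<^sup>2))"
proof -
  define \<Lambda> where "\<Lambda> = (\<Sum>i=1..m. outer (lam (uu i) - lam (uu 0)) (lam (uu i) - lam (uu 0)))"
  define A where "A t = matrix_inv \<Lambda>
      ** transpose (\<Sum>i=1..m. outer (w t (uu i) - w t (uu 0)) (lam (uu i) - lam (uu 0)))" for t
  define \<phi> where "\<phi> t i s = ln (1 + \<epsilon> t (uu i) * (\<delta> (uu i) s / pstar (uu i) s - 1))
                           - \<epsilon> t (uu i) * (\<delta> (uu i) s / pstar (uu i) s - 1)" for t i s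
  have model: "contaminated_exp_family_model f pstar \<delta> lam lam0 Z q (\<epsilon> t) (w t) (h t) (c t) (e t)" for t
  proof unfold_locales
    show "inj f"
      using A1 by (simp add: smooth_invertible_def bij_is_inj)
  qed (use eps_range delta_dens[unfolded is_density_def] A2 A4 in blast)+
  have "\<forall>t. \<exists>\<alpha>. \<forall>s. (\<chi> k. q k (s $ k))
           + (\<Sum>i=1..m. (\<epsilon> t (uu i) * (\<delta> (uu i) s / pstar (uu i) s) - \<epsilon> t (uu 0) * (\<delta> (uu 0) s / pstar (uu 0) s))
                     *\<^sub>R (matrix_inv \<Lambda> *v (lam (uu i) - lam (uu 0))))
           - (A t *v h t (f s) + \<alpha>)
         = (\<Sum>i=1..m. (\<phi> t 0 s - \<phi> t i s) *\<^sub>R (matrix_inv \<Lambda> *v (lam (uu i) - lam (uu 0))))"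
    unfolding A_def \<phi>_def \<Lambda>_def
    using contaminated_exp_family_model.affine_expansion[OF model A5a] by blast
  then obtain \<alpha> where \<alpha>: "\<And>t s. (\<chi> k. q k (s $ k))
           + (\<Sum>i=1..m. (\<epsilon> t (uu i) * (\<delta> (uu i) s / pstar (uu i) s) - \<epsilon> t (uu 0) * (\<delta> (uu 0) s / pstar (uu 0) s))
                     *\<^sub>R (matrix_inv \<Lambda> *v (lam (uu i) - lam (uu 0))))
           - (A t *v h t (f s) + \<alpha> t)
         = (\<Sum>i=1..m. (\<phi> t 0 s - \<phi> t i s) *\<^sub>R (matrix_inv \<Lambda> *v (lam (uu i) - lam (uu 0))))"
    by (auto dest!: choice)
  have \<phi>_bigo: "(\<lambda>t. \<phi> t i s) \<in> O[F](\<lambda>t. (Max ((\<lambda>i. \<epsilon> t (uu i)) ` {0..m}))\<^sup>2)" if "i \<le> m" for i s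
    unfolding \<phi>_def using that eps_range eps_small
    by (intro contamination_remainder_bigo[of "{0..m}" i "\<lambda>t j. \<epsilon> t (uu j)"]) auto
  have remainder_bigo: "(\<lambda>t. (\<Sum>i=1..m. (\<phi> t 0 s - \<phi> t i s) *\<^sub>R (matrix_inv \<Lambda> *v (lam (uu i) - lam (uu 0)))) $ j)
          \<in> O[F](\<lambda>t. (Max ((\<lambda>i. \<epsilon> t (uu i)) ` {0..m}))\<^sup>2)" for s j
    by (intro bigo_sum_scaleR_component sum_in_bigo(2) \<phi>_bigo) auto
  note remainder_bigo[unfolded \<alpha>[symmetric], unfolded \<Lambda>_def]
  moreover have "invertible (A t)" for t
    unfolding A_def \<Lambda>_def by (intro invertible_mult invertible_matrix_inv transpose_invertible A5a A5b)
  ultimately show ?thesis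
    by blast
qed

end
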